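(* The group $Fr(162\times 4)$ is not isomorphic to the group $\Sigma(216\times 3)$ (which also has order $648$).
   Context: Let $\omega=e^{2i\pi/3}$, $\varepsilon=e^{4i\pi/9}$, $J$ the $3\times3$ antidiagonal matrix with antidiagonal entries $1$. $G_1=\mathrm{diag}(e^{7i\pi/9},-e^{4i\pi/9},-e^{7i\pi/9})$, $G_2=\begin{pmatrix}-\tfrac12 e^{4i\pi/9}&\tfrac{1}{\sqrt2}e^{7i\pi/9}&\tfrac12 e^{4i\pi/9}\\ \tfrac{1}{\sqrt2}e^{7i\pi/9}&0&\tfrac{1}{\sqrt2}e^{7i\pi/9}\\ \tfrac12 e^{4i\pi/9}&\tfrac{1}{\sqrt2}e^{7i\pi/9}&-\tfrac12 e^{4i\pi/9}\end{pmatrix}$, $FUM=-\omega J$, $Fr(162\times 4)=\langle G_1,G_2,FUM\rangle\subset SU(3)$. $\Sigma(216\times 3)$ is the subgroup of $SU(3)$ generated by $D=\mathrm{diag}(\varepsilon,\varepsilon,\varepsilon\omega)$ and $V=\frac{1}{i\sqrt3}\begin{pmatrix}1&1&1\\1&\omega&\omega^2\\1&\omega^2&\omega\end{pmatrix}$. *)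

theory Defs
  imports "HOL-Analysis.Analysis" "HOL-Algebra.Generated_Groups"
begin

text \<open>The groups of the paper are the
  subgroups of it generated by the given matrices (they lie in SU(3)).\<close>

type_synonym cmat3 = "complex ^ 3 ^ 3"

definition GL3 :: "cmat3 monoid" where
  "GL3 = \<lparr>carrier = {A. invertible A}, mult = (\<lambda>A B. A ** B), one = mat 1\<rparr>"

definition mat3 :: "complex list list \<Rightarrow> cmat3" where
  "mat3 rs = vector (map vector rs)"

definition omega :: complex where "omega = cis (2 * pi / 3)"
definition eps :: complex where "eps = cis (4 * pi / 9)"

definition Jmat :: cmat3 where
  "Jmat = mat3 [[0,0,1],[0,1,0],[1,0,0]]"

definition G1 :: cmat3 where
  "G1 = mat3 [[cis (7*pi/9), 0, 0], [0, - cis (4*pi/9), 0], [0, 0, - cis (7*pi/9)]]"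

definition G2 :: cmat3 where
  "G2 = mat3
    [[- (1/2) * cis (4*pi/9), (1 / complex_of_real (sqrt 2)) * cis (7*pi/9), (1/2) * cis (4*pi/9)],
     [(1 / complex_of_real (sqrt 2)) * cis (7*pi/9), 0, (1 / complex_of_real (sqrt 2)) * cis (7*pi/9)],
     [(1/2) * cis (4*pi/9), (1 / complex_of_real (sqrt 2)) * cis (7*pi/9), - (1/2) * cis (4*pi/9)]]"

definition FUM :: cmat3 where
  "FUM = (\<chi> i j. - omega * Jmat $ i $ j)"

definition Dmat :: cmat3 where
  "Dmat = mat3 [[eps, 0, 0], [0, eps, 0], [0, 0, eps * omega]]"

definition Vmat :: cmat3 where
  "Vmat = (\<chi> i j. (1 / (\<i> * complex_of_real (sqrt 3))) *
      mat3 [[1,1,1],[1,omega,omega^2],[1,omega^2,omega]] $ i $ j)"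

definition Fr_162_4 :: "cmat3 monoid" where
  "Fr_162_4 = GL3\<lparr>carrier := generate GL3 {G1, G2, FUM}\<rparr>"

definition Sigma_216_3 :: "cmat3 monoid" where
  "Sigma_216_3 = GL3\<lparr>carrier := generate GL3 {Dmat, Vmat}\<rparr>"

end

theory Submission
  imports Defs "HOL-Algebra.Group_Action" "HOL-Combinatorics.Transposition"
begin

text \<open>Conjugation by the involution \<open>Qmat\<close> turns \<open>G1\<close>, \<open>G2\<close> and \<open>FUM\<close> into monomial
  matrices, so \<open>Fr(162\<times>4)\<close> is conjugate to a group of monomial matrices. The sixth power of a
  monomial matrix is diagonal, because every permutation of three letters has order dividing
  \<open>3! = 6\<close>; hence any two sixth powers in \<open>Fr(162\<times>4)\<close> commute. In \<open>\<Sigma>(216\<times>3)\<close> the sixth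
  power of \<open>V\<close> is the signed permutation matrix \<open>P = V\<^sup>2\<close>, and the sixth power \<open>D P D\<^sup>-\<^sup>1\<close> of
  \<open>D V D\<^sup>-\<^sup>1\<close> does not commute with \<open>P\<close>. Since commuting sixth powers are preserved by
  isomorphisms, the two groups are not isomorphic.\<close>

definition commuting_powers :: "('a, 'b) monoid_scheme \<Rightarrow> nat \<Rightarrow> bool" where
  "commuting_powers G n \<longleftrightarrow>
     (\<forall>x \<in> carrier G. \<forall>y \<in> carrier G. x [^]\<^bsub>G\<^esub> n \<otimes>\<^bsub>G\<^esub> y [^]\<^bsub>G\<^esub> n = y [^]\<^bsub>G\<^esub> n \<otimes>\<^bsub>G\<^esub> x [^]\<^bsub>G\<^esub> n)"

lemma commuting_powers_hom_image:
  assumes "group G" "group H" "h \<in> hom G H" "h ` carrier G = carrier H"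
    and "commuting_powers G n"
  shows "commuting_powers H n"
  unfolding commuting_powers_def
proof (intro ballI)
  fix u v assume "u \<in> carrier H" "v \<in> carrier H"
  then obtain x y where xy: "x \<in> carrier G" "y \<in> carrier G" "u = h x" "v = h y"
    using assms(4) by blast
  have pow: "h (z [^]\<^bsub>G\<^esub> n) = h z [^]\<^bsub>H\<^esub> n" if "z \<in> carrier G" for z
    using hom_nat_pow[OF assms(3) that assms(1,2)] .
  have closed: "z [^]\<^bsub>G\<^esub> n \<in> carrier G" if "z \<in> carrier G" for z
    using monoid.nat_pow_closed[OF group.is_monoid[OF assms(1)] that] .
  have "h (x [^]\<^bsub>G\<^esub> n \<otimes>\<^bsub>G\<^esub> y [^]\<^bsub>G\<^esub> n) = h (y [^]\<^bsub>G\<^esub> n \<otimes>\<^bsub>G\<^esub> x [^]\<^bsub>G\<^esub> n)"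
    using assms(5) xy(1,2) unfolding commuting_powers_def by simp
  then show "u [^]\<^bsub>H\<^esub> n \<otimes>\<^bsub>H\<^esub> v [^]\<^bsub>H\<^esub> n = v [^]\<^bsub>H\<^esub> n \<otimes>\<^bsub>H\<^esub> u [^]\<^bsub>H\<^esub> n"
    using hom_mult[OF assms(3)] closed pow xy by simp
qed

lemma (in group) nat_pow_conj:
  assumes "g \<in> carrier G" "x \<in> carrier G"
  shows "(g \<otimes> x \<otimes> inv g) [^] (n::nat) = g \<otimes> x [^] n \<otimes> inv g"
proof (induction n)
  case 0
  show ?case using assms(1) by (simp add: r_inv)
next
  case (Suc n)
  have "(g \<otimes> x \<otimes> inv g) [^] Suc n = g \<otimes> x [^] n \<otimes> inv g \<otimes> (g \<otimes> x \<otimes> inv g)"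
    using Suc by simp
  also have "\<dots> = g \<otimes> x [^] n \<otimes> (inv g \<otimes> g) \<otimes> x \<otimes> inv g"
    using assms by (simp only: m_assoc inv_closed nat_pow_closed m_closed)
  also have "\<dots> = g \<otimes> x [^] Suc n \<otimes> inv g"
    using assms by (simp add: m_assoc)
  finally show ?case .
qed

definition monomial_mat :: "('n \<Rightarrow> 'n) \<Rightarrow> ('n \<Rightarrow> 'a::comm_semiring_1) \<Rightarrow> 'a ^ 'n ^ 'n" where
  "monomial_mat \<sigma> c = (\<chi> i j. if i = \<sigma> j then c j else 0)"

lemma monomial_mat_mult:
  "monomial_mat \<sigma> c ** monomial_mat \<tau> d = monomial_mat (\<sigma> \<circ> \<tau>) (\<lambda>j. c (\<tau> j) * d j)"
proof -
  have "(\<Sum>k\<in>UNIV. (if i = \<sigma> k then c k else 0) * (if k = \<tau> j then d j else 0))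
      = (if i = \<sigma> (\<tau> j) then c (\<tau> j) * d j else 0)" for i j
  proof -
    have "(\<Sum>k\<in>UNIV. (if i = \<sigma> k then c k else 0) * (if k = \<tau> j then d j else 0))
        = (\<Sum>k\<in>UNIV. if k = \<tau> j then (if i = \<sigma> k then c k else 0) * d j else 0)"
      by (rule sum.cong) auto
    then show ?thesis by (simp add: sum.delta')
  qed
  then show ?thesis by (simp add: monomial_mat_def matrix_matrix_mult_def vec_eq_iff)
qed

lemma monomial_mat_one: "monomial_mat id (\<lambda>_. 1) = mat 1"
  by (simp add: monomial_mat_def mat_def vec_eq_iff)

lemma monomial_mat_id_commute:
  "monomial_mat id c ** monomial_mat id d = monomial_mat id d ** monomial_mat id c"
  by (simp add: monomial_mat_mult mult.commute)

lemma inj_funpow_returns: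
  fixes \<sigma> :: "'a::finite \<Rightarrow> 'a"
  assumes "inj \<sigma>"
  obtains a where "0 < a" "a \<le> CARD('a)" "(\<sigma> ^^ a) x = x"
proof -
  have "\<not> inj_on (\<lambda>k. (\<sigma> ^^ k) x) {0..CARD('a)}"
    by (rule pigeonhole) (simp add: le_imp_less_Suc card_mono)
  then obtain p q where pq: "p < q" "q \<le> CARD('a)" "(\<sigma> ^^ p) x = (\<sigma> ^^ q) x"
    unfolding inj_on_def by (metis atLeastAtMost_iff linorder_neqE_nat)
  have "(\<sigma> ^^ p) ((\<sigma> ^^ (q - p)) x) = (\<sigma> ^^ p) x"
    using pq by (metis add_diff_inverse_nat comp_apply funpow_add less_imp_not_less)
  then have "(\<sigma> ^^ (q - p)) x = x"
    using inj_fn[OF assms] by (meson injD)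
  then show thesis
    using pq by (intro that[of "q - p"]) auto
qed

lemma funpow_fact_card_eq_id:
  fixes \<sigma> :: "'a::finite \<Rightarrow> 'a"
  assumes "inj \<sigma>"
  shows "\<sigma> ^^ fact CARD('a) = id"
proof
  fix x
  obtain a where a: "0 < a" "a \<le> CARD('a)" "(\<sigma> ^^ a) x = x"
    using inj_funpow_returns[OF assms] .
  then obtain k where k: "fact CARD('a) = a * k"
    using dvd_fact by (metis One_nat_def Suc_leI dvdE)
  have "((\<sigma> ^^ a) ^^ m) x = x" for m
    by (induction m) (simp_all add: a(3))
  then show "(\<sigma> ^^ fact CARD('a)) x = id x"
    by (simp add: k funpow_mult)
qed

lemma group_GL3: "group GL3"
proof (rule groupI)
  show "\<one>\<^bsub>GL3\<^esub> \<in> carrier GL3"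
    unfolding GL3_def invertible_def by (auto intro!: exI[of _ "mat 1"])
  show "\<exists>B \<in> carrier GL3. B \<otimes>\<^bsub>GL3\<^esub> A = \<one>\<^bsub>GL3\<^esub>" if "A \<in> carrier GL3" for A
    using that unfolding GL3_def invertible_def by auto
qed (simp_all add: GL3_def invertible_mult matrix_mul_assoc)

lemma GL3_inv_eq:
  assumes "A ** B = mat 1" "B ** A = mat 1"
  shows "A \<in> carrier GL3" "inv\<^bsub>GL3\<^esub> A = B"
proof -
  show A: "A \<in> carrier GL3" using assms unfolding GL3_def invertible_def by auto
  have "B \<in> carrier GL3" using assms unfolding GL3_def invertible_def by auto
  then show "inv\<^bsub>GL3\<^esub> A = B"
    using group.inv_equality[OF group_GL3 _ A] assms(2) by (simp add: GL3_def)
qed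

lemma nat_pow_GL3_restrict: "x [^]\<^bsub>GL3\<lparr>carrier := S\<rparr>\<^esub> (n::nat) = x [^]\<^bsub>GL3\<^esub> n"
  by (induction n) simp_all

lemma group_generate_GL3:
  assumes "S \<subseteq> carrier GL3"
  shows "group (GL3\<lparr>carrier := generate GL3 S\<rparr>)"
  using group.generate_is_subgroup[OF group_GL3 assms] group_GL3
  by (rule subgroup.subgroup_is_group)

lemma mat3_mult:
  "mat3 [[a11,a12,a13],[a21,a22,a23],[a31,a32,a33]] ** mat3 [[b11,b12,b13],[b21,b22,b23],[b31,b32,b33]]
   = mat3 [[a11*b11+a12*b21+a13*b31, a11*b12+a12*b22+a13*b32, a11*b13+a12*b23+a13*b33],
           [a21*b11+a22*b21+a23*b31, a21*b12+a22*b22+a23*b32, a21*b13+a22*b23+a23*b33],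
           [a31*b11+a32*b21+a33*b31, a31*b12+a32*b22+a33*b32, a31*b13+a32*b23+a33*b33]]"
  by (simp add: vec_eq_iff forall_3 matrix_matrix_mult_def sum_3 mat3_def)

lemma mat3_eq_iff:
  "mat3 [[a11,a12,a13],[a21,a22,a23],[a31,a32,a33]] = mat3 [[b11,b12,b13],[b21,b22,b23],[b31,b32,b33]]
   \<longleftrightarrow> a11 = b11 \<and> a12 = b12 \<and> a13 = b13 \<and> a21 = b21 \<and> a22 = b22 \<and> a23 = b23 \<and>
       a31 = b31 \<and> a32 = b32 \<and> a33 = b33"
  by (simp add: vec_eq_iff forall_3 mat3_def)

lemma mat_one_mat3: "mat 1 = mat3 [[1,0,0],[0,1,0],[0,0,1]]"
  by (simp add: vec_eq_iff forall_3 mat3_def mat_def)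

lemma monomial_mat_mat3:
  "monomial_mat \<sigma> c = mat3
    [[if \<sigma> 1 = 1 then c 1 else 0, if \<sigma> 2 = 1 then c 2 else 0, if \<sigma> 3 = 1 then c 3 else 0],
     [if \<sigma> 1 = 2 then c 1 else 0, if \<sigma> 2 = 2 then c 2 else 0, if \<sigma> 3 = 2 then c 3 else 0],
     [if \<sigma> 1 = 3 then c 1 else 0, if \<sigma> 2 = 3 then c 2 else 0, if \<sigma> 3 = 3 then c 3 else 0]]"
  by (auto simp: monomial_mat_def mat3_def vec_eq_iff forall_3)

lemma omega_cube: "omega ^ 3 = 1"
proof -
  have "omega ^ 3 = cis (real 3 * (2 * pi / 3))"
    unfolding omega_def by (rule Complex.DeMoivre)
  also have "real 3 * (2 * pi / 3) = 2 * pi" by simp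
  finally show ?thesis by (simp del: cis.ctr)
qed

lemma omega_neq_1: "omega \<noteq> 1"
proof
  assume "omega = 1"
  then have "cos (2 * pi / 3) = 1" by (simp add: omega_def complex_eq_iff)
  then show False by (simp add: cos_120)
qed

lemma omega_neq_0: "omega \<noteq> 0"
  by (simp add: omega_def)

lemma omega_sum: "1 + omega + omega ^ 2 = 0"
proof -
  have "(omega - 1) * (1 + omega + omega ^ 2) = omega ^ 3 - 1"
    by (simp add: algebra_simps power2_eq_square power3_eq_cube)
  then show ?thesis using omega_cube omega_neq_1 by simp
qed

definition inv_sqrt2 :: complex where "inv_sqrt2 = 1 / complex_of_real (sqrt 2)"

lemma inv_sqrt2_sq: "inv_sqrt2 * inv_sqrt2 = 1 / 2"
  by (simp add: inv_sqrt2_def flip: of_real_mult)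

definition Qmat :: cmat3 where
  "Qmat = mat3 [[inv_sqrt2, 0, inv_sqrt2], [0, 1, 0], [inv_sqrt2, 0, - inv_sqrt2]]"

lemma Qmat_involution: "Qmat ** Qmat = mat 1"
  unfolding Qmat_def mat3_mult mat_one_mat3 mat3_eq_iff by (simp add: inv_sqrt2_sq)

lemma Qmat_cancel_right: "A ** Qmat ** Qmat = A"
  by (simp add: Qmat_involution flip: matrix_mul_assoc)

lemma Qmat_conj_mult: "(Qmat ** A ** Qmat) ** (Qmat ** B ** Qmat) = Qmat ** (A ** B) ** Qmat"
  by (simp add: matrix_mul_assoc Qmat_cancel_right)

lemma Qmat_GL3: "Qmat \<in> carrier GL3" "inv\<^bsub>GL3\<^esub> Qmat = Qmat"
  using GL3_inv_eq[OF Qmat_involution Qmat_involution] by auto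

lemma mem_Qmat_conj_iff:
  "x \<in> Qmat <#\<^bsub>GL3\<^esub> H #>\<^bsub>GL3\<^esub> Qmat \<longleftrightarrow> (\<exists>m \<in> H. x = Qmat ** m ** Qmat)"
  by (auto simp: l_coset_def r_coset_def GL3_def)

definition monomial_group :: "cmat3 set" where
  "monomial_group = {monomial_mat \<sigma> c | \<sigma> c. bij \<sigma> \<and> (\<forall>j. c j \<noteq> 0)}"

lemma monomial_groupI: "bij \<sigma> \<Longrightarrow> \<forall>j. c j \<noteq> 0 \<Longrightarrow> monomial_mat \<sigma> c \<in> monomial_group"
  unfolding monomial_group_def by blast

lemma monomial_mat_inverse:
  fixes c :: "'n::finite \<Rightarrow> 'a::field"
  assumes "bij \<sigma>" "\<forall>j. c j \<noteq> 0"
  defines "c' \<equiv> \<lambda>j. 1 / c (inv_into UNIV \<sigma> j)"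
  shows "monomial_mat \<sigma> c ** monomial_mat (inv_into UNIV \<sigma>) c' = mat 1"
    and "monomial_mat (inv_into UNIV \<sigma>) c' ** monomial_mat \<sigma> c = mat 1"
proof -
  have "\<sigma> \<circ> inv_into UNIV \<sigma> = id" "inv_into UNIV \<sigma> \<circ> \<sigma> = id"
    using assms(1) by (meson bij_is_surj surj_iff, meson bij_is_inj inj_iff)
  moreover have "inv_into UNIV \<sigma> (\<sigma> j) = j" for j
    using assms(1) by (simp add: bij_is_inj)
  ultimately show "monomial_mat \<sigma> c ** monomial_mat (inv_into UNIV \<sigma>) c' = mat 1"
    and "monomial_mat (inv_into UNIV \<sigma>) c' ** monomial_mat \<sigma> c = mat 1"
    using assms(2) by (simp_all add: c'_def monomial_mat_mult monomial_mat_one[symmetric])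
qed

lemma monomial_group_inv:
  assumes "m \<in> monomial_group"
  shows "m \<in> carrier GL3" "inv\<^bsub>GL3\<^esub> m \<in> monomial_group"
proof -
  obtain \<sigma> c where m: "m = monomial_mat \<sigma> c" "bij \<sigma>" "\<forall>j. c j \<noteq> 0"
    using assms by (auto simp: monomial_group_def)
  define c' where "c' = (\<lambda>j. 1 / c (inv_into UNIV \<sigma> j))"
  have inv_m: "m \<in> carrier GL3" "inv\<^bsub>GL3\<^esub> m = monomial_mat (inv_into UNIV \<sigma>) c'"
    using GL3_inv_eq monomial_mat_inverse[OF m(2,3)] by (simp_all add: m c'_def)
  then show "m \<in> carrier GL3" by simp
  have "bij (inv_into UNIV \<sigma>)" "\<forall>j. c' j \<noteq> 0"
    using m(2,3) by (simp_all add: bij_imp_bij_inv c'_def)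
  then show "inv\<^bsub>GL3\<^esub> m \<in> monomial_group"
    using inv_m(2) unfolding monomial_group_def by blast
qed

lemma subgroup_monomial_group: "subgroup monomial_group GL3"
proof (rule group.subgroupI[OF group_GL3])
  have "monomial_mat id (\<lambda>_. 1) \<in> monomial_group"
    by (rule monomial_groupI) simp_all
  then show "monomial_group \<noteq> {}" by blast
next
  fix m m' assume "m \<in> monomial_group" "m' \<in> monomial_group"
  then obtain \<sigma> c \<tau> d where
    "m = monomial_mat \<sigma> c" "bij \<sigma>" "\<forall>j. c j \<noteq> 0"
    "m' = monomial_mat \<tau> d" "bij \<tau>" "\<forall>j. d j \<noteq> 0"
    unfolding monomial_group_def by blast
  then show "m \<otimes>\<^bsub>GL3\<^esub> m' \<in> monomial_group"
    by (simp add: GL3_def monomial_mat_mult monomial_groupI bij_comp)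
qed (use monomial_group_inv in blast)+

lemma monomial_mat_nat_pow: "\<exists>d. monomial_mat \<sigma> c [^]\<^bsub>GL3\<^esub> (n::nat) = monomial_mat (\<sigma> ^^ n) d"
proof (induction n)
  case 0
  have "monomial_mat \<sigma> c [^]\<^bsub>GL3\<^esub> (0::nat) = monomial_mat (\<sigma> ^^ 0) (\<lambda>_. 1)"
    by (simp add: GL3_def monomial_mat_one)
  then show ?case by blast
next
  case (Suc n)
  then obtain d where "monomial_mat \<sigma> c [^]\<^bsub>GL3\<^esub> n = monomial_mat (\<sigma> ^^ n) d" ..
  then have "monomial_mat \<sigma> c [^]\<^bsub>GL3\<^esub> Suc n = monomial_mat (\<sigma> ^^ Suc n) (\<lambda>j. d (\<sigma> j) * c j)"
    by (simp add: GL3_def monomial_mat_mult funpow_Suc_right del: funpow.simps)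
  then show ?case by blast
qed

lemma monomial_group_pow6_diagonal:
  assumes "m \<in> monomial_group"
  shows "\<exists>d. m [^]\<^bsub>GL3\<^esub> (6::nat) = monomial_mat id d"
proof -
  obtain \<sigma> c where m: "m = monomial_mat \<sigma> c" "bij \<sigma>"
    using assms by (auto simp: monomial_group_def)
  have "\<sigma> ^^ 6 = id"
    using funpow_fact_card_eq_id[OF bij_is_inj[OF m(2)]] by (simp add: numeral_eq_Suc)
  then show ?thesis
    using monomial_mat_nat_pow[of \<sigma> c 6] m(1) by simp
qed

lemma Qmat_conj_transpose13:
  "Qmat ** monomial_mat (Transposition.transpose 1 3) (($) (vector [a, b, a])) ** Qmat
   = mat3 [[a, 0, 0], [0, b, 0], [0, 0, - a]]"
  unfolding Qmat_def monomial_mat_mat3 mat3_mult mat3_eq_iff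
  using inv_sqrt2_sq by simp algebra

lemma Qmat_conj_transpose12:
  "Qmat ** monomial_mat (Transposition.transpose 1 2) (($) (vector [b, b, - a])) ** Qmat
   = mat3 [[- (1/2) * a, inv_sqrt2 * b, (1/2) * a],
           [inv_sqrt2 * b, 0, inv_sqrt2 * b],
           [(1/2) * a, inv_sqrt2 * b, - (1/2) * a]]"
  unfolding Qmat_def monomial_mat_mat3 mat3_mult mat3_eq_iff
  using inv_sqrt2_sq by simp algebra

lemma Qmat_conj_diag:
  "Qmat ** monomial_mat id (($) (vector [- a, - a, a])) ** Qmat
   = mat3 [[0, 0, - a], [0, - a, 0], [- a, 0, 0]]"
  unfolding Qmat_def monomial_mat_mat3 mat3_mult mat3_eq_iff
  using inv_sqrt2_sq by simp algebra

lemma FUM_mat3: "FUM = mat3 [[0, 0, - omega], [0, - omega, 0], [- omega, 0, 0]]"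
  by (simp add: FUM_def Jmat_def mat3_def vec_eq_iff forall_3)

lemma Qmat_conj_monomial_memI:
  fixes c :: "3 \<Rightarrow> complex"
  assumes "bij \<sigma>" "\<forall>j. c j \<noteq> 0"
  shows "Qmat ** monomial_mat \<sigma> c ** Qmat \<in> Qmat <#\<^bsub>GL3\<^esub> monomial_group #>\<^bsub>GL3\<^esub> Qmat"
  using monomial_groupI[OF assms] unfolding mem_Qmat_conj_iff by blast

lemma generators_Fr_conj_monomial:
  "{G1, G2, FUM} \<subseteq> Qmat <#\<^bsub>GL3\<^esub> monomial_group #>\<^bsub>GL3\<^esub> Qmat"
proof -
  have nonzero: "\<forall>j. (vector [x, y, z] :: complex ^ 3) $ j \<noteq> 0" if "x \<noteq> 0" "y \<noteq> 0" "z \<noteq> 0" for x y z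
    using that by (simp add: forall_3)
  have G1: "G1 = Qmat ** monomial_mat (Transposition.transpose 1 3)
               (($) (vector [cis (7*pi/9), - cis (4*pi/9), cis (7*pi/9)])) ** Qmat"
    by (simp only: G1_def Qmat_conj_transpose13)
  have G2: "G2 = Qmat ** monomial_mat (Transposition.transpose 1 2)
               (($) (vector [cis (7*pi/9), cis (7*pi/9), - cis (4*pi/9)])) ** Qmat"
    by (simp only: G2_def Qmat_conj_transpose12 inv_sqrt2_def)
  have FUM: "FUM = Qmat ** monomial_mat id (($) (vector [- omega, - omega, omega])) ** Qmat"
    by (simp only: FUM_mat3 Qmat_conj_diag)
  show ?thesis
    unfolding insert_subset G1 G2 FUM
    by (intro conjI empty_subsetI Qmat_conj_monomial_memI nonzero)
       (simp_all add: omega_neq_0 del: cis.ctr)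
qed

lemma subgroup_Qmat_conj_monomial_group:
  "subgroup (Qmat <#\<^bsub>GL3\<^esub> monomial_group #>\<^bsub>GL3\<^esub> Qmat) GL3"
  using group.subgroup_conjugation_is_surj1[OF group_GL3 Qmat_GL3(1) subgroup_monomial_group]
  unfolding Qmat_GL3(2) .

lemma Fr_carrier_subset: "carrier Fr_162_4 \<subseteq> Qmat <#\<^bsub>GL3\<^esub> monomial_group #>\<^bsub>GL3\<^esub> Qmat"
  using group.generate_subgroup_incl[OF group_GL3 generators_Fr_conj_monomial
      subgroup_Qmat_conj_monomial_group]
  unfolding Fr_162_4_def by simp

lemma group_Fr: "group Fr_162_4"
  unfolding Fr_162_4_def
  using generators_Fr_conj_monomial subgroup.subset[OF subgroup_Qmat_conj_monomial_group]
  by (intro group_generate_GL3) blast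

lemma Qmat_conj_pow6_diagonal:
  assumes "x \<in> Qmat <#\<^bsub>GL3\<^esub> monomial_group #>\<^bsub>GL3\<^esub> Qmat"
  shows "\<exists>d. x [^]\<^bsub>GL3\<^esub> (6::nat) = Qmat ** monomial_mat id d ** Qmat"
proof -
  obtain m where m: "m \<in> monomial_group" "x = Qmat ** m ** Qmat"
    using assms unfolding mem_Qmat_conj_iff by blast
  have "x = Qmat \<otimes>\<^bsub>GL3\<^esub> m \<otimes>\<^bsub>GL3\<^esub> inv\<^bsub>GL3\<^esub> Qmat"
    unfolding Qmat_GL3(2) by (simp add: m(2) GL3_def)
  then have "x [^]\<^bsub>GL3\<^esub> (6::nat) = Qmat ** m [^]\<^bsub>GL3\<^esub> (6::nat) ** Qmat"
    using group.nat_pow_conj[OF group_GL3 Qmat_GL3(1) monomial_group_inv(1)[OF m(1)]]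
    unfolding Qmat_GL3(2) by (simp add: GL3_def)
  then show ?thesis
    using monomial_group_pow6_diagonal[OF m(1)] by auto
qed

lemma commuting_powers_Fr: "commuting_powers Fr_162_4 6"
  unfolding commuting_powers_def
proof (intro ballI)
  fix x y assume "x \<in> carrier Fr_162_4" "y \<in> carrier Fr_162_4"
  then obtain d e where
    "x [^]\<^bsub>GL3\<^esub> (6::nat) = Qmat ** monomial_mat id d ** Qmat"
    "y [^]\<^bsub>GL3\<^esub> (6::nat) = Qmat ** monomial_mat id e ** Qmat"
    using Fr_carrier_subset Qmat_conj_pow6_diagonal by (meson subsetD)
  then show "x [^]\<^bsub>Fr_162_4\<^esub> (6::nat) \<otimes>\<^bsub>Fr_162_4\<^esub> y [^]\<^bsub>Fr_162_4\<^esub> (6::nat)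
           = y [^]\<^bsub>Fr_162_4\<^esub> (6::nat) \<otimes>\<^bsub>Fr_162_4\<^esub> x [^]\<^bsub>Fr_162_4\<^esub> (6::nat)"
    unfolding Fr_162_4_def nat_pow_GL3_restrict
    by (simp add: GL3_def Qmat_conj_mult monomial_mat_id_commute)
qed

definition v_scale :: complex where "v_scale = 1 / (\<i> * complex_of_real (sqrt 3))"

lemma v_scale_sq: "v_scale * v_scale = - 1 / 3"
proof -
  have "complex_of_real (sqrt 3) * complex_of_real (sqrt 3) = 3"
    by (simp flip: of_real_mult)
  then show ?thesis
    unfolding v_scale_def by (simp add: field_simps)
qed

lemma Vmat_mat3:
  "Vmat = mat3 [[v_scale, v_scale, v_scale],
                [v_scale, v_scale * omega, v_scale * omega ^ 2],
                [v_scale, v_scale * omega ^ 2, v_scale * omega]]"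
  by (simp add: Vmat_def v_scale_def mat3_def vec_eq_iff forall_3)

definition Pmat :: cmat3 where "Pmat = mat3 [[-1, 0, 0], [0, 0, -1], [0, -1, 0]]"

lemma Vmat_sq: "Vmat ** Vmat = Pmat"
  unfolding Vmat_mat3 Pmat_def mat3_mult mat3_eq_iff
  using v_scale_sq omega_cube omega_sum by simp algebra

lemma Pmat_sq: "Pmat ** Pmat = mat 1"
  unfolding Pmat_def mat3_mult mat_one_mat3 mat3_eq_iff by simp

lemma Vmat_GL3: "Vmat \<in> carrier GL3"
proof (rule GL3_inv_eq(1))
  have "Vmat ** (Vmat ** Vmat ** Vmat) = (Vmat ** Vmat) ** (Vmat ** Vmat)"
    by (simp only: matrix_mul_assoc)
  then show "Vmat ** (Vmat ** Vmat ** Vmat) = mat 1"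
    by (simp only: Vmat_sq Pmat_sq)
  have "Vmat ** Vmat ** Vmat ** Vmat = (Vmat ** Vmat) ** (Vmat ** Vmat)"
    by (simp only: matrix_mul_assoc)
  then show "Vmat ** Vmat ** Vmat ** Vmat = mat 1"
    by (simp only: Vmat_sq Pmat_sq)
qed

lemma Vmat_pow6: "Vmat [^]\<^bsub>GL3\<^esub> (6::nat) = Pmat"
proof -
  have "Vmat [^]\<^bsub>GL3\<^esub> (6::nat) = (Vmat ** Vmat) ** (Vmat ** Vmat) ** (Vmat ** Vmat)"
    by (simp add: GL3_def numeral_eq_Suc matrix_mul_assoc)
  then show ?thesis
    by (simp add: Vmat_sq Pmat_sq)
qed

definition Dmat_inv :: cmat3 where
  "Dmat_inv = mat3 [[1 / eps, 0, 0], [0, 1 / eps, 0], [0, 0, 1 / (eps * omega)]]"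

lemma Dmat_GL3: "Dmat \<in> carrier GL3" "inv\<^bsub>GL3\<^esub> Dmat = Dmat_inv"
proof -
  have "eps \<noteq> 0" by (simp add: eps_def)
  then have "Dmat ** Dmat_inv = mat 1" "Dmat_inv ** Dmat = mat 1"
    unfolding Dmat_def Dmat_inv_def mat3_mult mat_one_mat3 mat3_eq_iff
    using omega_neq_0 by simp_all
  then show "Dmat \<in> carrier GL3" "inv\<^bsub>GL3\<^esub> Dmat = Dmat_inv"
    by (rule GL3_inv_eq)+
qed

lemma Pmat_conj_Dmat_not_commute: "Pmat ** (Dmat ** Pmat ** Dmat_inv) \<noteq> (Dmat ** Pmat ** Dmat_inv) ** Pmat"
proof
  assume "Pmat ** (Dmat ** Pmat ** Dmat_inv) = (Dmat ** Pmat ** Dmat_inv) ** Pmat"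
  then have "omega = 1 / omega"
    unfolding Pmat_def Dmat_def Dmat_inv_def mat3_mult mat3_eq_iff
    by (simp add: eps_def)
  then have "omega ^ 3 = omega"
    using omega_neq_0 by (simp add: field_simps power3_eq_cube)
  then show False
    using omega_cube omega_neq_1 by simp
qed

lemma not_commuting_powers_Sigma: "\<not> commuting_powers Sigma_216_3 6"
proof
  assume comm: "commuting_powers Sigma_216_3 6"
  let ?W = "Dmat \<otimes>\<^bsub>GL3\<^esub> Vmat \<otimes>\<^bsub>GL3\<^esub> inv\<^bsub>GL3\<^esub> Dmat"
  have "Dmat \<in> generate GL3 {Dmat, Vmat}" and V: "Vmat \<in> generate GL3 {Dmat, Vmat}"
    by (simp_all add: generate.incl)
  then have "?W \<in> generate GL3 {Dmat, Vmat}"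
    by (intro generate.eng generate.inv) simp_all
  then have "Vmat [^]\<^bsub>GL3\<^esub> (6::nat) ** ?W [^]\<^bsub>GL3\<^esub> (6::nat)
             = ?W [^]\<^bsub>GL3\<^esub> (6::nat) ** Vmat [^]\<^bsub>GL3\<^esub> (6::nat)"
    using comm V unfolding commuting_powers_def Sigma_216_3_def nat_pow_GL3_restrict
    by (auto simp: GL3_def)
  moreover have "?W [^]\<^bsub>GL3\<^esub> (6::nat) = Dmat ** Pmat ** Dmat_inv"
    using group.nat_pow_conj[OF group_GL3 Dmat_GL3(1) Vmat_GL3, of 6]
    unfolding Dmat_GL3(2) Vmat_pow6 by (simp add: GL3_def)
  ultimately show False
    using Pmat_conj_Dmat_not_commute by (simp add: Vmat_pow6)
qed

lemma group_Sigma: "group Sigma_216_3"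
  unfolding Sigma_216_3_def
  using Dmat_GL3(1) Vmat_GL3 by (intro group_generate_GL3) simp

theorem theorem9:
  shows "\<not> (Fr_162_4 \<cong> Sigma_216_3)"
proof
  assume "Fr_162_4 \<cong> Sigma_216_3"
  then obtain h where "h \<in> hom Fr_162_4 Sigma_216_3" "h ` carrier Fr_162_4 = carrier Sigma_216_3"
    unfolding is_iso_def iso_def bij_betw_def by blast
  then have "commuting_powers Sigma_216_3 6"
    using commuting_powers_hom_image group_Fr group_Sigma commuting_powers_Fr by blast
  then show False
    using not_commuting_powers_Sigma by contradiction
qed

end
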